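(* Let $L:\mathbb{R}^n\times\mathbb{R}^n\to\mathbb{R}$ be smooth (time-independent). For $a=(q_a,t_a)$, $b=(q_b,t_b)\in\mathbb{R}^n\times\mathbb{R}$ with $t_b\neq t_a$ put $$v(a,b)=\frac{q_b-q_a}{t_b-t_a},\qquad e(a,b)=L(q_a,v(a,b))-\langle D_2L(q_a,v(a,b)),v(a,b)\rangle .$$ Consider sequences $x_k=(q_k,t_k)$ (with $t_{k+1}\ne t_k$), and write $v_k=v(x_k,x_{k+1})$, $e_{k+1}=e(x_k,x_{k+1})$. The symplectic–energy Störmer-type scheme is $$e_{k+1}=e_k,\qquad (t_{k+1}-t_k)\,D_1L(q_k,v_k)-\big(D_2L(q_k,v_k)-D_2L(q_{k-1},v_{k-1})\big)=0 .$$ Then: (i) along any solution the energy $E_k:=\langle D_2L(q_{k-1},v_{k-1}),v_{k-1}\rangle-L(q_{k-1},v_{k-1})=-e_k$ is constant in $k$; (ii) if $U\subset(\mathbb{R}^n\times\mathbb{R})^2$ is open and $G:U\to(\mathbb{R}^n\times\mathbb{R})^2$ is smooth with $G(x_{k-1},x_k)=(x_k,x_{k+1})$ satisfying the scheme for every $(x_{k-1},x_k)\in U$, then, defining on $U$ the one-form $\theta^L=e(a,b)\,dt_b+\sum_i D_2L(q_a,v(a,b))_i\,dq_b^i$ and $\omega^L=d\theta^L$, we have $G^*\omega^L=\omega^L$ (the Lagrangian two-form is preserved).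
   Context: This scheme is the discrete Euler–Lagrange system obtained from the generalized discrete Hamilton's principle with time as a generalized coordinate: parametric discrete Lagrangian $\bar L_d=\Delta_\tau t_k\,L(q_k,\Delta_\tau q_k/\Delta_\tau t_k)$ with forward differences $\Delta_\tau q_k=(q_{k+1}-q_k)/\tau$, $\Delta_\tau t_k=(t_{k+1}-t_k)/\tau$, and $e_{k+1}=\partial\bar L_d/\partial(\Delta_\tau t_k)$. *)

theory Defs
  imports "HOL-Analysis.Analysis"
begin

fun Ck_on :: "nat \<Rightarrow> 'a::euclidean_space set \<Rightarrow> ('a \<Rightarrow> 'b::euclidean_space) \<Rightarrow> bool" where
  "Ck_on 0 S f = continuous_on S f"
| "Ck_on (Suc k) S f =
     ((\<forall>x\<in>S. f differentiable (at x)) \<and>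
      (\<forall>i\<in>Basis. Ck_on k S (\<lambda>x. frechet_derivative f (at x) i)))"

definition smooth_on :: "'a::euclidean_space set \<Rightarrow> ('a \<Rightarrow> 'b::euclidean_space) \<Rightarrow> bool" where
  "smooth_on S f \<longleftrightarrow> (\<forall>k. Ck_on k S f)"

definition D1 :: "((real^'n) \<times> (real^'n) \<Rightarrow> real) \<Rightarrow> real^'n \<Rightarrow> real^'n \<Rightarrow> real^'n" where
  "D1 L q v = (\<chi> i. frechet_derivative L (at (q, v)) (axis i 1, 0))"

definition D2 :: "((real^'n) \<times> (real^'n) \<Rightarrow> real) \<Rightarrow> real^'n \<Rightarrow> real^'n \<Rightarrow> real^'n" where
  "D2 L q v = (\<chi> i. frechet_derivative L (at (q, v)) (0, axis i 1))"

definition vel :: "(real^'n) \<times> real \<Rightarrow> (real^'n) \<times> real \<Rightarrow> real^'n" where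
  "vel a b = (fst b - fst a) /\<^sub>R (snd b - snd a)"

definition en :: "((real^'n) \<times> (real^'n) \<Rightarrow> real) \<Rightarrow> (real^'n) \<times> real \<Rightarrow> (real^'n) \<times> real \<Rightarrow> real" where
  "en L a b = L (fst a, vel a b) - D2 L (fst a) (vel a b) \<bullet> vel a b"

text \<open>The scheme relating x_{k-1}=a, x_k=b, x_{k+1}=c.\<close>
definition scheme :: "((real^'n) \<times> (real^'n) \<Rightarrow> real) \<Rightarrow> (real^'n) \<times> real \<Rightarrow> (real^'n) \<times> real \<Rightarrow> (real^'n) \<times> real \<Rightarrow> bool" where
  "scheme L a b c \<longleftrightarrow> snd c \<noteq> snd b \<and> en L b c = en L a b \<and>
     (snd c - snd b) *\<^sub>R D1 L (fst b) (vel b c) - (D2 L (fst b) (vel b c) - D2 L (fst a) (vel a b)) = 0"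

text \<open>Discrete energy E_k for k >= 1.\<close>
definition energy :: "((real^'n) \<times> (real^'n) \<Rightarrow> real) \<Rightarrow> (nat \<Rightarrow> (real^'n) \<times> real) \<Rightarrow> nat \<Rightarrow> real" where
  "energy L x k = D2 L (fst (x (k - 1))) (vel (x (k - 1)) (x k)) \<bullet> vel (x (k - 1)) (x k)
                  - L (fst (x (k - 1)), vel (x (k - 1)) (x k))"

text \<open>The one-form theta^L = e(a,b) dt_b + sum_i D2L(q_a,v(a,b))_i dq_b^i, represented
  (via the inner product) as a vector field on (R^n x R)^2.\<close>
definition theta :: "((real^'n) \<times> (real^'n) \<Rightarrow> real) \<Rightarrow> ((real^'n) \<times> real) \<times> ((real^'n) \<times> real)
                     \<Rightarrow> ((real^'n) \<times> real) \<times> ((real^'n) \<times> real)" where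
  "theta L z = ((0, 0), (D2 L (fst (fst z)) (vel (fst z) (snd z)), en L (fst z) (snd z)))"

text \<open>omega^L = d theta^L evaluated on tangent vectors X, Y at z:
  d theta (X,Y) = (D theta X) . Y - (D theta Y) . X.\<close>
definition omega :: "((real^'n) \<times> (real^'n) \<Rightarrow> real) \<Rightarrow> ((real^'n) \<times> real) \<times> ((real^'n) \<times> real)
       \<Rightarrow> ((real^'n) \<times> real) \<times> ((real^'n) \<times> real) \<Rightarrow> ((real^'n) \<times> real) \<times> ((real^'n) \<times> real) \<Rightarrow> real" where
  "omega L z X Y = frechet_derivative (theta L) (at z) X \<bullet> Y - frechet_derivative (theta L) (at z) Y \<bullet> X"

end

theory Submission
  imports Defs
begin

text \<open>
  Part (i) is algebra: by definition \<open>E\<^sub>k = -e\<^sub>k\<close>, and the scheme says \<open>e\<^sub>k\<^sub>+\<^sub>1 = e\<^sub>k\<close>.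

  For part (ii) let \<open>L\<^sub>d(a,b) = (t\<^sub>b - t\<^sub>a) L(q\<^sub>a, v(a,b))\<close>. Its differential splits as
  \<open>dL\<^sub>d = \<theta>\<^sup>L + \<theta>\<^sup>-\<close>, where \<open>\<theta>\<^sup>- = ((t\<^sub>b - t\<^sub>a) D\<^sub>1L - D\<^sub>2L) dq\<^sub>a - e(a,b) dt\<^sub>a\<close> only involves
  the \<open>a\<close>-variables, and the two equations of the scheme say precisely \<open>G\<^sup>*\<theta>\<^sup>- = -\<theta>\<^sup>L\<close>.
  Hence, using \<open>d dL\<^sub>d = 0\<close> and \<open>G\<^sup>*d = d G\<^sup>*\<close>,
  \<open>G\<^sup>*\<omega>\<^sup>L = G\<^sup>*d\<theta>\<^sup>L = -G\<^sup>*d\<theta>\<^sup>- = -d G\<^sup>*\<theta>\<^sup>- = d\<theta>\<^sup>L = \<omega>\<^sup>L\<close>.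
  Both \<open>d d = 0\<close> and the naturality of \<open>d\<close> come down to the symmetry of second derivatives,
  which follows from the mean value theorem.
\<close>

section \<open>Symmetry of second derivatives\<close>

lemma mixed_difference_mean_value:
  fixes f :: "'a::real_normed_vector \<Rightarrow> real"
  assumes f: "\<And>y. y \<in> ball x r \<Longrightarrow> (f has_derivative f' y) (at y)"
    and "0 < t" "t * norm h + t * norm k < r"
  obtains s where "0 \<le> s" "s \<le> t"
    "f (x + t *\<^sub>R k + t *\<^sub>R h) - f (x + t *\<^sub>R h) - f (x + t *\<^sub>R k) + f x
       = t * (f' (x + t *\<^sub>R k + s *\<^sub>R h) h - f' (x + s *\<^sub>R h) h)"
proof -
  define g where "g u = f (x + t *\<^sub>R k + u *\<^sub>R h) - f (x + u *\<^sub>R h)" for u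
  have in_ball: "x + b *\<^sub>R k + u *\<^sub>R h \<in> ball x r" if "0 \<le> u" "u \<le> t" "0 \<le> b" "b \<le> t" for u b
  proof -
    have "norm (b *\<^sub>R k + u *\<^sub>R h) \<le> b * norm k + u * norm h"
      using norm_triangle_ineq[of "b *\<^sub>R k" "u *\<^sub>R h"] that by simp
    also have "\<dots> \<le> t * norm k + t * norm h"
      using that by (intro add_mono mult_right_mono) auto
    finally have "dist (x + b *\<^sub>R k + u *\<^sub>R h) x < r"
      using assms(3) by (simp add: dist_norm add.assoc)
    then show ?thesis
      by (simp add: dist_commute)
  qed
  have "DERIV g u :> f' (x + t *\<^sub>R k + u *\<^sub>R h) h - f' (x + u *\<^sub>R h) h" if "0 \<le> u" "u \<le> t" for u
  proof -
    have line: "((\<lambda>u. y + u *\<^sub>R h) has_derivative (\<lambda>v. v *\<^sub>R h)) (at u)" for y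
      by (auto intro!: derivative_eq_intros)
    have scale: "f' y (v *\<^sub>R h) = v * f' y h" if "y \<in> ball x r" for y v
      using f[OF that] has_derivative_linear linear_scale by fastforce
    have "x + t *\<^sub>R k + u *\<^sub>R h \<in> ball x r" "x + u *\<^sub>R h \<in> ball x r"
      using in_ball[OF that, of t] in_ball[OF that, of 0] \<open>0 < t\<close> by auto
    moreover from this have "(g has_derivative
        (\<lambda>v. f' (x + t *\<^sub>R k + u *\<^sub>R h) (v *\<^sub>R h) - f' (x + u *\<^sub>R h) (v *\<^sub>R h))) (at u)"
      unfolding g_def by (intro has_derivative_diff has_derivative_compose[OF line f, unfolded o_def])
    ultimately show ?thesis
      unfolding has_field_derivative_def
      by (simp add: scale right_diff_distrib[symmetric] mult.commute[of _ "_ - _"])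
  qed
  then obtain s where "0 < s" "s < t"
    "g t - g 0 = (t - 0) * (f' (x + t *\<^sub>R k + s *\<^sub>R h) h - f' (x + s *\<^sub>R h) h)"
    using MVT2[of 0 t g "\<lambda>u. f' (x + t *\<^sub>R k + u *\<^sub>R h) h - f' (x + u *\<^sub>R h) h"] \<open>0 < t\<close> by auto
  then show thesis
    by (intro that[of s]) (auto simp: g_def)
qed

lemma mixed_difference_approx:
  fixes f :: "'a::real_normed_vector \<Rightarrow> real"
  assumes "open S" "x \<in> S"
    and f: "\<And>y. y \<in> S \<Longrightarrow> (f has_derivative f' y) (at y)"
    and F: "((\<lambda>y. f' y h) has_derivative F) (at x)"
    and "e > 0"
  shows "\<exists>d>0. \<forall>t. 0 < t \<and> t < d \<longrightarrow>
     \<bar>f (x + t *\<^sub>R k + t *\<^sub>R h) - f (x + t *\<^sub>R h) - f (x + t *\<^sub>R k) + f x - t\<^sup>2 * F k\<bar>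
       \<le> e * t\<^sup>2 * (2 * norm h + norm k)"
proof -
  obtain d1 where "d1 > 0" and d1: "\<And>y. norm (y - x) < d1 \<Longrightarrow>
      \<bar>f' y h - f' x h - F (y - x)\<bar> \<le> e * norm (y - x)"
    using F \<open>e > 0\<close> unfolding has_derivative_at_alt by (metis real_norm_def)
  obtain r where "r > 0" "ball x r \<subseteq> S"
    using \<open>open S\<close> \<open>x \<in> S\<close> open_contains_ball by blast
  define d where "d = min d1 r / (norm h + norm k + 1)"
  have "d > 0"
    using \<open>d1 > 0\<close> \<open>r > 0\<close> by (simp add: d_def add_nonneg_pos)
  moreover have "\<bar>f (x + t *\<^sub>R k + t *\<^sub>R h) - f (x + t *\<^sub>R h) - f (x + t *\<^sub>R k) + f x - t\<^sup>2 * F k\<bar>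
       \<le> e * t\<^sup>2 * (2 * norm h + norm k)" if "0 < t" "t < d" for t
  proof -
    have "t * (norm h + norm k + 1) < min d1 r"
      using \<open>t < d\<close> unfolding d_def by (simp add: pos_less_divide_eq add_nonneg_pos)
    then have small: "t * norm h + t * norm k < min d1 r"
      using \<open>0 < t\<close> by (simp add: algebra_simps)
    obtain s where "0 \<le> s" "s \<le> t" and mvt:
      "f (x + t *\<^sub>R k + t *\<^sub>R h) - f (x + t *\<^sub>R h) - f (x + t *\<^sub>R k) + f x
         = t * (f' (x + t *\<^sub>R k + s *\<^sub>R h) h - f' (x + s *\<^sub>R h) h)"
    proof (rule mixed_difference_mean_value)
      show "(f has_derivative f' y) (at y)" if "y \<in> ball x r" for y
        using f that \<open>ball x r \<subseteq> S\<close> by blast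
    qed (use \<open>0 < t\<close> small in auto)
    define p where "p = x + t *\<^sub>R k + s *\<^sub>R h"
    define q where "q = x + s *\<^sub>R h"
    have q_near: "norm (q - x) \<le> t * norm h"
      using \<open>0 \<le> s\<close> \<open>s \<le> t\<close> by (simp add: q_def mult_right_mono)
    have p_near: "norm (p - x) \<le> t * norm h + t * norm k"
      using norm_triangle_ineq[of "t *\<^sub>R k" "s *\<^sub>R h"] q_near \<open>0 < t\<close> by (simp add: p_def q_def)
    have p_err: "\<bar>f' p h - f' x h - F (p - x)\<bar> \<le> e * norm (p - x)"
      using d1 p_near small by simp
    have q_err: "\<bar>f' q h - f' x h - F (q - x)\<bar> \<le> e * norm (q - x)"
      using d1 q_near small norm_ge_zero[of k] \<open>0 < t\<close> by (smt (verit) mult_nonneg_nonneg)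
    have "linear F"
      using F has_derivative_linear by blast
    then have "F (p - x) - F (q - x) = F ((p - x) - (q - x))"
      by (simp add: linear_diff)
    also have "\<dots> = t * F k"
      using \<open>linear F\<close> by (simp add: p_def q_def linear_scale)
    finally have "F (p - x) - F (q - x) = t * F k" .
    then have "f (x + t *\<^sub>R k + t *\<^sub>R h) - f (x + t *\<^sub>R h) - f (x + t *\<^sub>R k) + f x - t\<^sup>2 * F k
        = t * ((f' p h - f' x h - F (p - x)) - (f' q h - f' x h - F (q - x)))"
      unfolding mvt p_def[symmetric] q_def[symmetric] by (simp add: power2_eq_square algebra_simps)
    also have "\<bar>\<dots>\<bar> \<le> t * (e * norm (p - x) + e * norm (q - x))"
      using p_err q_err \<open>0 < t\<close> by (simp add: abs_mult)
    also have "\<dots> \<le> t * (e * (t * norm h + t * norm k) + e * (t * norm h))"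
      using p_near q_near \<open>0 < t\<close> \<open>e > 0\<close> by (intro mult_left_mono add_mono) auto
    also have "\<dots> = e * t\<^sup>2 * (2 * norm h + norm k)"
      by (simp add: power2_eq_square algebra_simps)
    finally show ?thesis .
  qed
  ultimately show ?thesis
    by blast
qed

lemma second_derivative_symmetric:
  fixes f :: "'a::real_normed_vector \<Rightarrow> real"
  assumes "open S" "x \<in> S"
    and f: "\<And>y. y \<in> S \<Longrightarrow> (f has_derivative f' y) (at y)"
    and f': "\<And>v. ((\<lambda>y. f' y v) has_derivative f'' v) (at x)"
  shows "f'' h k = f'' k h"
proof -
  define C where "C = 3 * (norm h + norm k) + 1"
  have "C > 0"
    unfolding C_def by (simp add: add_nonneg_pos)
  have "\<bar>f'' h k - f'' k h\<bar> \<le> 0 + e" if "e > 0" for e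
  proof -
    define \<Delta> where "\<Delta> t = f (x + t *\<^sub>R k + t *\<^sub>R h) - f (x + t *\<^sub>R h) - f (x + t *\<^sub>R k) + f x" for t
    have \<Delta>_swap: "\<Delta> t = f (x + t *\<^sub>R h + t *\<^sub>R k) - f (x + t *\<^sub>R k) - f (x + t *\<^sub>R h) + f x" for t
      unfolding \<Delta>_def by (simp add: algebra_simps)
    define \<epsilon> where "\<epsilon> = e / C"
    have "\<epsilon> > 0"
      using \<open>e > 0\<close> \<open>C > 0\<close> by (simp add: \<epsilon>_def)
    have "\<exists>d>0. \<forall>t. 0 < t \<and> t < d \<longrightarrow>
        \<bar>\<Delta> t - t\<^sup>2 * f'' h k\<bar> \<le> \<epsilon> * t\<^sup>2 * (2 * norm h + norm k)"
      unfolding \<Delta>_def by (rule mixed_difference_approx[OF assms(1,2) f f' \<open>\<epsilon> > 0\<close>])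
    then obtain d1 where "d1 > 0" and d1: "\<And>t. 0 < t \<and> t < d1 \<Longrightarrow>
        \<bar>\<Delta> t - t\<^sup>2 * f'' h k\<bar> \<le> \<epsilon> * t\<^sup>2 * (2 * norm h + norm k)"
      by blast
    have "\<exists>d>0. \<forall>t. 0 < t \<and> t < d \<longrightarrow>
        \<bar>\<Delta> t - t\<^sup>2 * f'' k h\<bar> \<le> \<epsilon> * t\<^sup>2 * (2 * norm k + norm h)"
      unfolding \<Delta>_swap by (rule mixed_difference_approx[OF assms(1,2) f f' \<open>\<epsilon> > 0\<close>])
    then obtain d2 where "d2 > 0" and d2: "\<And>t. 0 < t \<and> t < d2 \<Longrightarrow>
        \<bar>\<Delta> t - t\<^sup>2 * f'' k h\<bar> \<le> \<epsilon> * t\<^sup>2 * (2 * norm k + norm h)"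
      by blast
    define t where "t = min d1 d2 / 2"
    have "0 < t" "t < d1" "t < d2"
      using \<open>d1 > 0\<close> \<open>d2 > 0\<close> by (auto simp: t_def)
    have "t\<^sup>2 * \<bar>f'' h k - f'' k h\<bar> = \<bar>(\<Delta> t - t\<^sup>2 * f'' k h) - (\<Delta> t - t\<^sup>2 * f'' h k)\<bar>"
      by (simp add: abs_mult right_diff_distrib[symmetric])
    also have "\<dots> \<le> \<epsilon> * t\<^sup>2 * (2 * norm k + norm h) + \<epsilon> * t\<^sup>2 * (2 * norm h + norm k)"
      using d1 d2 \<open>0 < t\<close> \<open>t < d1\<close> \<open>t < d2\<close> abs_triangle_ineq4 by (smt (verit))
    also have "\<dots> = \<epsilon> * t\<^sup>2 * (3 * (norm h + norm k))"
      by (simp add: algebra_simps)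
    also have "\<dots> \<le> \<epsilon> * t\<^sup>2 * C"
      using \<open>\<epsilon> > 0\<close> by (intro mult_left_mono) (auto simp: C_def)
    also have "\<dots> = t\<^sup>2 * e"
      using \<open>C > 0\<close> by (simp add: \<epsilon>_def)
    finally show ?thesis
      using \<open>0 < t\<close> by simp
  qed
  then show ?thesis
    using field_le_epsilon[of "\<bar>f'' h k - f'' k h\<bar>" 0] by simp
qed

text \<open>Exact one-forms are closed.\<close>

lemma gradient_derivative_symmetric:
  fixes f :: "'a::real_inner \<Rightarrow> real"
  assumes "open S" "z \<in> S"
    and f: "\<And>y. y \<in> S \<Longrightarrow> (f has_derivative (\<lambda>X. F y \<bullet> X)) (at y)"
    and F: "(F has_derivative F') (at z)"
  shows "F' X \<bullet> Y = F' Y \<bullet> X"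
proof -
  have "((\<lambda>y. F y \<bullet> v) has_derivative (\<lambda>u. F' u \<bullet> v)) (at z)" for v
    using F by (auto intro!: derivative_eq_intros)
  from second_derivative_symmetric[OF assms(1,2) f this] show ?thesis .
qed

text \<open>Naturality of the exterior derivative, \<open>d (G\<^sup>*F) = G\<^sup>*(dF)\<close>, for one-forms written as
  vector fields via the inner product.\<close>

lemma pullback_derivative_antisym:
  fixes G :: "'a::real_inner \<Rightarrow> 'b::real_inner" and F :: "'b \<Rightarrow> 'b" and H :: "'a \<Rightarrow> 'a"
  assumes "open U" "z \<in> U"
    and G: "\<And>w. w \<in> U \<Longrightarrow> (G has_derivative G' w) (at w)"
    and G': "\<And>v. ((\<lambda>w. G' w v) has_derivative G'' v) (at z)"
    and F: "(F has_derivative F') (at (G z))"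
    and H: "(H has_derivative H') (at z)"
    and pullback: "\<And>w Y. w \<in> U \<Longrightarrow> F (G w) \<bullet> G' w Y = H w \<bullet> Y"
  shows "F' (G' z X) \<bullet> G' z Y - F' (G' z Y) \<bullet> G' z X = H' X \<bullet> Y - H' Y \<bullet> X"
proof -
  have product_rule: "F' (G' z X) \<bullet> G' z Y + F (G z) \<bullet> G'' Y X = H' X \<bullet> Y" for X Y
  proof -
    have "((\<lambda>w. F (G w) \<bullet> G' w Y) has_derivative (\<lambda>X. F (G z) \<bullet> G'' Y X + F' (G' z X) \<bullet> G' z Y)) (at z)"
      using has_derivative_compose[OF G[OF \<open>z \<in> U\<close>] F] G'
      by (auto intro!: derivative_eq_intros simp: o_def)
    then have "((\<lambda>w. H w \<bullet> Y) has_derivative (\<lambda>X. F (G z) \<bullet> G'' Y X + F' (G' z X) \<bullet> G' z Y)) (at z)"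
      by (rule has_derivative_transform_within_open[OF _ assms(1,2)]) (simp add: pullback)
    moreover have "((\<lambda>w. H w \<bullet> Y) has_derivative (\<lambda>X. H' X \<bullet> Y)) (at z)"
      using H by (auto intro!: derivative_eq_intros)
    ultimately show ?thesis
      by (metis add.commute has_derivative_unique)
  qed
  have "F (G z) \<bullet> G'' Y X = F (G z) \<bullet> G'' X Y"
  proof (rule second_derivative_symmetric[OF assms(1,2)])
    show "((\<lambda>w. F (G z) \<bullet> G w) has_derivative (\<lambda>v. F (G z) \<bullet> G' w v)) (at w)" if "w \<in> U" for w
      using G[OF that] by (auto intro!: derivative_eq_intros)
    show "((\<lambda>w. F (G z) \<bullet> G' w v) has_derivative (\<lambda>u. F (G z) \<bullet> G'' v u)) (at z)" for v
      using G' by (auto intro!: derivative_eq_intros)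
  qed
  then show ?thesis
    using product_rule[of X Y] product_rule[of Y X] by simp
qed

section \<open>Smooth maps and the partial gradients of the Lagrangian\<close>

lemma smooth_on_differentiable:
  assumes "smooth_on S f" "x \<in> S"
  shows "f differentiable at x"
  using assms unfolding smooth_on_def by (metis Ck_on.simps(2))

lemma smooth_on_frechet_derivative_differentiable:
  assumes "smooth_on S f" "open S" "x \<in> S"
  shows "(\<lambda>y. frechet_derivative f (at y) v) differentiable at x"
proof -
  have "Ck_on (Suc (Suc 0)) S f"
    using assms(1) unfolding smooth_on_def by blast
  then have f: "\<forall>y\<in>S. f differentiable at y"
    and f': "\<forall>b\<in>Basis. (\<lambda>y. frechet_derivative f (at y) b) differentiable at x"
    using assms(3) by auto
  have "(\<lambda>y. \<Sum>b\<in>Basis. (v \<bullet> b) *\<^sub>R frechet_derivative f (at y) b) differentiable at x"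
    using f' by (intro differentiable_sum differentiable_scaleR) auto
  then obtain D where "((\<lambda>y. \<Sum>b\<in>Basis. (v \<bullet> b) *\<^sub>R frechet_derivative f (at y) b) has_derivative D) (at x)"
    unfolding differentiable_def by blast
  moreover have "(\<Sum>b\<in>Basis. (v \<bullet> b) *\<^sub>R frechet_derivative f (at y) b) = frechet_derivative f (at y) v"
    if "y \<in> S" for y
  proof -
    have "linear (frechet_derivative f (at y))"
      using f that by (simp add: linear_frechet_derivative)
    then have "frechet_derivative f (at y) (\<Sum>b\<in>Basis. (v \<bullet> b) *\<^sub>R b)
        = (\<Sum>b\<in>Basis. (v \<bullet> b) *\<^sub>R frechet_derivative f (at y) b)"
      by (simp add: linear_sum linear_scale)
    then show ?thesis
      by (simp add: euclidean_representation)
  qed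
  ultimately have "((\<lambda>y. frechet_derivative f (at y) v) has_derivative D) (at x)"
    by (rule has_derivative_transform_within_open[OF _ assms(2,3)])
  then show ?thesis
    unfolding differentiable_def by blast
qed

lemma inner_D1_Basis:
  assumes "(b :: real^'n) \<in> Basis"
  shows "D1 L q v \<bullet> b = frechet_derivative L (at (q, v)) (b, 0)"
  using assms by (auto simp: Basis_vec_def D1_def inner_axis)

lemma inner_D2_Basis:
  assumes "(b :: real^'n) \<in> Basis"
  shows "D2 L q v \<bullet> b = frechet_derivative L (at (q, v)) (0, b)"
  using assms by (auto simp: Basis_vec_def D2_def inner_axis)

lemma D1_eq_sum: "D1 L q v = (\<Sum>b\<in>Basis. frechet_derivative L (at (q, v)) (b, 0) *\<^sub>R b)"
  by (subst euclidean_representation[symmetric]) (simp add: inner_D1_Basis)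

lemma D2_eq_sum: "D2 L q v = (\<Sum>b\<in>Basis. frechet_derivative L (at (q, v)) (0, b) *\<^sub>R b)"
  by (subst euclidean_representation[symmetric]) (simp add: inner_D2_Basis)

lemma frechet_derivative_eq_D1_D2:
  fixes L :: "(real^'n) \<times> (real^'n) \<Rightarrow> real"
  assumes "L differentiable at (q, v)"
  shows "frechet_derivative L (at (q, v)) (h, k) = D1 L q v \<bullet> h + D2 L q v \<bullet> k"
proof -
  let ?L' = "frechet_derivative L (at (q, v))"
  have lin: "linear ?L'"
    using assms by (rule linear_frechet_derivative)
  have "(h, k) = (\<Sum>b\<in>Basis. (h \<bullet> b) *\<^sub>R (b, 0) + (k \<bullet> b) *\<^sub>R (0, b))"
    by (simp add: prod_eq_iff fst_sum snd_sum sum.distrib euclidean_representation)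
  then have "?L' (h, k) = ?L' (\<Sum>b\<in>Basis. (h \<bullet> b) *\<^sub>R (b, 0) + (k \<bullet> b) *\<^sub>R (0, b))"
    by (rule arg_cong)
  also have "\<dots> = (\<Sum>b\<in>Basis. (h \<bullet> b) * ?L' (b, 0) + (k \<bullet> b) * ?L' (0, b))"
    by (simp only: linear_sum[OF lin] linear_add[OF lin] linear_scale[OF lin] real_scaleR_def)
  also have "\<dots> = D1 L q v \<bullet> h + D2 L q v \<bullet> k"
    by (simp add: D1_eq_sum D2_eq_sum inner_sum_right sum.distrib inner_commute mult.commute)
  finally show ?thesis .
qed

lemma differentiable_D1_D2:
  fixes L :: "(real^'n) \<times> (real^'n) \<Rightarrow> real"
  assumes L: "smooth_on UNIV L" and "f differentiable at z" "g differentiable at z"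
  shows "(\<lambda>z. D1 L (f z) (g z)) differentiable at z"
    and "(\<lambda>z. D2 L (f z) (g z)) differentiable at z"
proof -
  have "(\<lambda>z. (f z, g z)) differentiable at z"
    using assms(2,3) by simp
  then have "(\<lambda>z. frechet_derivative L (at (f z, g z)) w) differentiable at z" for w
    by (rule differentiable_compose[OF smooth_on_frechet_derivative_differentiable[OF L open_UNIV UNIV_I]])
  then show "(\<lambda>z. D1 L (f z) (g z)) differentiable at z" "(\<lambda>z. D2 L (f z) (g z)) differentiable at z"
    unfolding D1_eq_sum D2_eq_sum by (auto intro!: differentiable_sum differentiable_scaleR)
qed

section \<open>The discrete Lagrangian and its one-forms\<close>

text \<open>The parametric discrete Lagrangian \<open>\<Delta>\<^sub>\<tau>t\<^sub>k L(q\<^sub>k, \<Delta>\<^sub>\<tau>q\<^sub>k / \<Delta>\<^sub>\<tau>t\<^sub>k)\<close> of the paper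
  with \<open>\<tau> = 1\<close>.\<close>

definition disc_lagrangian :: "((real^'n) \<times> (real^'n) \<Rightarrow> real) \<Rightarrow> ((real^'n) \<times> real) \<times> ((real^'n) \<times> real) \<Rightarrow> real"
  where "disc_lagrangian L z = (snd (snd z) - snd (fst z)) * L (fst (fst z), vel (fst z) (snd z))"

definition theta_minus :: "((real^'n) \<times> (real^'n) \<Rightarrow> real) \<Rightarrow> ((real^'n) \<times> real) \<times> ((real^'n) \<times> real)
    \<Rightarrow> ((real^'n) \<times> real) \<times> ((real^'n) \<times> real)"
  where "theta_minus L z =
    (((snd (snd z) - snd (fst z)) *\<^sub>R D1 L (fst (fst z)) (vel (fst z) (snd z))
        - D2 L (fst (fst z)) (vel (fst z) (snd z)), - en L (fst z) (snd z)), (0, 0))"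

lemma has_derivative_vel:
  assumes "snd (snd z) \<noteq> snd (fst z)"
  shows "((\<lambda>z. vel (fst z) (snd z)) has_derivative
     (\<lambda>X. ((fst (snd X) - fst (fst X)) - (snd (snd X) - snd (fst X)) *\<^sub>R vel (fst z) (snd z))
            /\<^sub>R (snd (snd z) - snd (fst z)))) (at z)"
  using assms unfolding vel_def
  by (auto intro!: derivative_eq_intros simp: divide_inverse_commute fun_eq_iff scaleR_diff_right mult_ac)

lemma has_derivative_disc_lagrangian:
  fixes L :: "(real^'n) \<times> (real^'n) \<Rightarrow> real"
  assumes L: "\<And>p. L differentiable at p" and "snd (snd z) \<noteq> snd (fst z)"
  shows "(disc_lagrangian L has_derivative (\<lambda>X. (theta L z + theta_minus L z) \<bullet> X)) (at z)"
proof -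
  obtain qa ta qb tb where z: "z = ((qa, ta), (qb, tb))"
    by (metis prod.collapse)
  define v where "v = vel (qa, ta) (qb, tb)"
  define dv where "dv X = ((fst (snd X) - fst (fst X)) - (snd (snd X) - snd (fst X)) *\<^sub>R v) /\<^sub>R (tb - ta)" for X
  have "tb - ta \<noteq> 0"
    using assms(2) z by simp
  have "((\<lambda>z. (fst (fst z), vel (fst z) (snd z))) has_derivative (\<lambda>X. (fst (fst X), dv X))) (at z)"
    using has_derivative_vel[OF assms(2)] unfolding z v_def dv_def
    by (auto intro!: derivative_eq_intros)
  moreover have "(L has_derivative frechet_derivative L (at (qa, v))) (at (qa, v))"
    using L frechet_derivative_works by blast
  ultimately have "((\<lambda>z. L (fst (fst z), vel (fst z) (snd z))) has_derivative
      (\<lambda>X. D1 L qa v \<bullet> fst (fst X) + D2 L qa v \<bullet> dv X)) (at z)"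
    using has_derivative_compose by (fastforce simp: z v_def frechet_derivative_eq_D1_D2[OF L] o_def)
  then have "(disc_lagrangian L has_derivative (\<lambda>X. (snd (snd X) - snd (fst X)) * L (qa, v)
      + (tb - ta) * (D1 L qa v \<bullet> fst (fst X) + D2 L qa v \<bullet> dv X))) (at z)"
    unfolding disc_lagrangian_def[abs_def] z v_def
    by (auto intro!: derivative_eq_intros simp: algebra_simps)
  moreover have "(snd (snd X) - snd (fst X)) * L (qa, v) + (tb - ta) * (D1 L qa v \<bullet> fst (fst X) + D2 L qa v \<bullet> dv X)
      = (theta L z + theta_minus L z) \<bullet> X" for X
  proof -
    obtain dqa dta dqb dtb where X: "X = ((dqa, dta), (dqb, dtb))"
      by (metis prod.collapse)
    have "(tb - ta) * (D2 L qa v \<bullet> dv X) = D2 L qa v \<bullet> (dqb - dqa) - (dtb - dta) * (D2 L qa v \<bullet> v)"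
      using \<open>tb - ta \<noteq> 0\<close> by (simp add: dv_def X inner_diff_right)
    then show ?thesis
      by (simp add: X z theta_def theta_minus_def en_def v_def[symmetric] inner_prod_def
          inner_diff_left inner_diff_right algebra_simps)
  qed
  ultimately show ?thesis
    by simp
qed

lemma differentiable_vel:
  assumes "snd (snd z) \<noteq> snd (fst z)"
  shows "(\<lambda>z. vel (fst z) (snd z)) differentiable at z"
  using has_derivative_vel[OF assms] unfolding differentiable_def by blast

lemma differentiable_D1_D2_en:
  fixes L :: "(real^'n) \<times> (real^'n) \<Rightarrow> real"
  assumes L: "smooth_on UNIV L" and "snd (snd z) \<noteq> snd (fst z)"
  shows "(\<lambda>z. D1 L (fst (fst z)) (vel (fst z) (snd z))) differentiable at z"
    and "(\<lambda>z. D2 L (fst (fst z)) (vel (fst z) (snd z))) differentiable at z"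
    and "(\<lambda>z. en L (fst z) (snd z)) differentiable at z"
proof -
  note v = differentiable_vel[OF assms(2)]
  have q: "(\<lambda>z. fst (fst z)) differentiable at z"
    unfolding differentiable_def by (auto intro!: derivative_eq_intros)
  show D1: "(\<lambda>z. D1 L (fst (fst z)) (vel (fst z) (snd z))) differentiable at z"
    and D2: "(\<lambda>z. D2 L (fst (fst z)) (vel (fst z) (snd z))) differentiable at z"
    using differentiable_D1_D2[OF L q v] by auto
  have "(\<lambda>z. L (fst (fst z), vel (fst z) (snd z))) differentiable at z"
    by (rule differentiable_compose[OF smooth_on_differentiable[OF L UNIV_I]])
      (simp add: q v)
  then show "(\<lambda>z. en L (fst z) (snd z)) differentiable at z"
    unfolding en_def using D2 v by (intro differentiable_diff differentiable_inner)
qed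

lemma differentiable_theta:
  assumes "smooth_on UNIV L" "snd (snd z) \<noteq> snd (fst z)"
  shows "theta L differentiable at z"
  unfolding theta_def[abs_def] using differentiable_D1_D2_en[OF assms] by simp

lemma differentiable_theta_minus:
  assumes "smooth_on UNIV L" "snd (snd z) \<noteq> snd (fst z)"
  shows "theta_minus L differentiable at z"
proof -
  have "(\<lambda>z. snd (snd z) - snd (fst z)) differentiable at z"
    unfolding differentiable_def by (auto intro!: derivative_eq_intros)
  then show ?thesis
    unfolding theta_minus_def[abs_def] using differentiable_D1_D2_en[OF assms] by simp
qed

text \<open>For a map following the scheme this says that it pulls \<open>theta_minus\<close> back to \<open>-theta\<close>: the
  discrete Euler--Lagrange equation gives the \<open>q\<close>-components, energy conservation the
  \<open>t\<close>-component.\<close>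

lemma scheme_theta_minus:
  assumes "scheme L a b c"
  shows "theta_minus L (b, c) = ((- D2 L (fst a) (vel a b), - en L a b), (0, 0))"
  using assms unfolding scheme_def theta_minus_def by (simp add: algebra_simps)

lemma energy_eq_neg_en: "energy L x k = - en L (x (k - 1)) (x k)"
  unfolding energy_def en_def by simp

lemma scheme_en_constant:
  assumes "\<forall>k\<ge>1. scheme L (x (k - 1)) (x k) (x (k + 1))"
  shows "en L (x k) (x (Suc k)) = en L (x 0) (x 1)"
proof (induction k)
  case (Suc k)
  have "scheme L (x k) (x (Suc k)) (x (Suc (Suc k)))"
    using assms[rule_format, of "Suc k"] by simp
  then show ?case
    using Suc.IH unfolding scheme_def by simp
qed simp

lemma fst_derivative_eq_snd:
  assumes "open U" "w \<in> U" "(G has_derivative G') (at w)" "\<And>w. w \<in> U \<Longrightarrow> fst (G w) = snd w"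
  shows "fst (G' Y) = snd Y"
proof -
  have "((\<lambda>w. fst (G w)) has_derivative (\<lambda>Y. fst (G' Y))) (at w)"
    using assms(3) by (auto intro!: derivative_eq_intros)
  then have "(snd has_derivative (\<lambda>Y. fst (G' Y))) (at w)"
    by (rule has_derivative_transform_within_open[OF _ assms(1,2)]) (simp add: assms(4))
  then have "(\<lambda>Y. fst (G' Y)) = snd"
    using has_derivative_unique has_derivative_snd[OF has_derivative_ident] by blast
  from fun_cong[OF this, of Y] show ?thesis
    by simp
qed

lemma omega_eq_neg_d_theta_minus:
  fixes L :: "(real^'n) \<times> (real^'n) \<Rightarrow> real"
  assumes L: "smooth_on UNIV L" and "snd (snd y) \<noteq> snd (fst y)"
  shows "omega L y A B
    = frechet_derivative (theta_minus L) (at y) B \<bullet> A - frechet_derivative (theta_minus L) (at y) A \<bullet> B"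
proof -
  define \<Theta> where "\<Theta> = frechet_derivative (theta L) (at y)"
  define \<Theta>m where "\<Theta>m = frechet_derivative (theta_minus L) (at y)"
  let ?W = "{z :: ((real^'n) \<times> real) \<times> ((real^'n) \<times> real). snd (snd z) \<noteq> snd (fst z)}"
  have "open ?W"
    by (intro open_Collect_neq continuous_intros)
  have "(\<Theta> A + \<Theta>m A) \<bullet> B = (\<Theta> B + \<Theta>m B) \<bullet> A"
  proof (rule gradient_derivative_symmetric[OF \<open>open ?W\<close>])
    show "y \<in> ?W"
      using assms(2) by simp
    show "(disc_lagrangian L has_derivative (\<lambda>X. (theta L w + theta_minus L w) \<bullet> X)) (at w)"
      if "w \<in> ?W" for w
      using has_derivative_disc_lagrangian smooth_on_differentiable[OF L UNIV_I] that by blast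
    have "(theta L has_derivative \<Theta>) (at y)" "(theta_minus L has_derivative \<Theta>m) (at y)"
      using differentiable_theta[OF assms] differentiable_theta_minus[OF assms]
      by (simp_all add: \<Theta>_def \<Theta>m_def frechet_derivative_works)
    then show "((\<lambda>w. theta L w + theta_minus L w) has_derivative (\<lambda>A. \<Theta> A + \<Theta>m A)) (at y)"
      by (rule has_derivative_add)
  qed
  then show ?thesis
    unfolding omega_def \<Theta>_def[symmetric] \<Theta>m_def[symmetric] by (simp add: inner_add_left algebra_simps)
qed

lemma scheme_map_pullback_theta_minus:
  assumes "open U" "w \<in> U" "(G has_derivative G') (at w)"
    and scheme: "\<forall>z\<in>U. fst (G z) = snd z \<and> scheme L (fst z) (snd z) (snd (G z))"
  shows "theta_minus L (G w) \<bullet> G' Y = - theta L w \<bullet> Y"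
proof -
  have "G w = (snd w, snd (G w))" "scheme L (fst w) (snd w) (snd (G w))"
    using scheme \<open>w \<in> U\<close> by (auto simp: prod_eq_iff)
  then have "theta_minus L (G w) = ((- D2 L (fst (fst w)) (vel (fst w) (snd w)), - en L (fst w) (snd w)), (0, 0))"
    by (metis scheme_theta_minus)
  moreover have "fst (G' Y) = snd Y"
    using fst_derivative_eq_snd[OF assms(1-3)] scheme by blast
  ultimately show ?thesis
    by (simp add: inner_prod_def theta_def)
qed

lemma scheme_map_preserves_omega:
  fixes L :: "(real^'n) \<times> (real^'n) \<Rightarrow> real"
    and G :: "((real^'n) \<times> real) \<times> ((real^'n) \<times> real) \<Rightarrow> ((real^'n) \<times> real) \<times> ((real^'n) \<times> real)"
  assumes L: "smooth_on UNIV L" and "open U" and t_neq: "\<forall>z\<in>U. snd (fst z) \<noteq> snd (snd z)"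
    and G: "smooth_on U G"
    and scheme: "\<forall>z\<in>U. fst (G z) = snd z \<and> scheme L (fst z) (snd z) (snd (G z))"
    and "z \<in> U"
  shows "omega L (G z) (frechet_derivative G (at z) X) (frechet_derivative G (at z) Y) = omega L z X Y"
proof -
  define G' where "G' w = frechet_derivative G (at w)" for w
  define G'' where "G'' v = frechet_derivative (\<lambda>w. G' w v) (at z)" for v
  define \<Theta> where "\<Theta> = frechet_derivative (theta L) (at z)"
  define \<Theta>mG where "\<Theta>mG = frechet_derivative (theta_minus L) (at (G z))"
  have "snd (snd (G z)) \<noteq> snd (fst (G z))"
    using scheme \<open>z \<in> U\<close> unfolding scheme_def by auto
  have G'_deriv: "(G has_derivative G' w) (at w)" if "w \<in> U" for w
    using smooth_on_differentiable[OF G that] unfolding G'_def by (rule frechet_derivative_works[THEN iffD1])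
  have "\<Theta>mG (G' z X) \<bullet> G' z Y - \<Theta>mG (G' z Y) \<bullet> G' z X = - \<Theta> X \<bullet> Y - - \<Theta> Y \<bullet> X"
  proof (rule pullback_derivative_antisym[OF \<open>open U\<close> \<open>z \<in> U\<close> G'_deriv])
    show "((\<lambda>w. G' w v) has_derivative G'' v) (at z)" for v
      using smooth_on_frechet_derivative_differentiable[OF G \<open>open U\<close> \<open>z \<in> U\<close>]
      unfolding G'_def G''_def by (rule frechet_derivative_works[THEN iffD1])
    show "(theta_minus L has_derivative \<Theta>mG) (at (G z))"
      using differentiable_theta_minus[OF L \<open>snd (snd (G z)) \<noteq> snd (fst (G z))\<close>]
      by (simp add: \<Theta>mG_def frechet_derivative_works)
    have "snd (snd z) \<noteq> snd (fst z)"
      using t_neq \<open>z \<in> U\<close> by auto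
    then show "((\<lambda>w. - theta L w) has_derivative (\<lambda>X. - \<Theta> X)) (at z)"
      using differentiable_theta[OF L] by (auto simp: \<Theta>_def frechet_derivative_works intro: has_derivative_minus)
    show "theta_minus L (G w) \<bullet> G' w Y = - theta L w \<bullet> Y" if "w \<in> U" for w Y
      using scheme_map_pullback_theta_minus[OF \<open>open U\<close> that G'_deriv[OF that] scheme] .
  qed
  then show ?thesis
    using omega_eq_neg_d_theta_minus[OF L \<open>snd (snd (G z)) \<noteq> snd (fst (G z))\<close>]
    unfolding omega_def[of L z] G'_def[symmetric] \<Theta>_def[symmetric] \<Theta>mG_def[symmetric] by simp
qed

theorem mainTheorem5:
  fixes L :: "(real^'n) \<times> (real^'n) \<Rightarrow> real"
  assumes "smooth_on UNIV L"
  shows "(\<forall>x :: nat \<Rightarrow> (real^'n) \<times> real.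
            (\<forall>k. snd (x (Suc k)) \<noteq> snd (x k)) \<longrightarrow>
            (\<forall>k\<ge>1. scheme L (x (k - 1)) (x k) (x (k + 1))) \<longrightarrow>
            (\<forall>k\<ge>1. energy L x k = - en L (x (k - 1)) (x k) \<and> energy L x k = energy L x 1))
       \<and> (\<forall>(U :: (((real^'n) \<times> real) \<times> ((real^'n) \<times> real)) set) G.
            open U \<longrightarrow> (\<forall>z\<in>U. snd (fst z) \<noteq> snd (snd z)) \<longrightarrow> smooth_on U G \<longrightarrow>
            (\<forall>z\<in>U. fst (G z) = snd z \<and> scheme L (fst z) (snd z) (snd (G z))) \<longrightarrow>
            (\<forall>z\<in>U. \<forall>X Y. omega L (G z) (frechet_derivative G (at z) X) (frechet_derivative G (at z) Y)
                          = omega L z X Y))"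
proof (rule conjI; intro allI impI ballI)
  fix x :: "nat \<Rightarrow> (real^'n) \<times> real" and k :: nat
  assume "\<forall>k\<ge>1. scheme L (x (k - 1)) (x k) (x (k + 1))" "k \<ge> 1"
  then obtain j where "k = Suc j" "en L (x j) (x (Suc j)) = en L (x 0) (x 1)"
    using scheme_en_constant not0_implies_Suc by (metis not_one_le_zero)
  then show "energy L x k = - en L (x (k - 1)) (x k) \<and> energy L x k = energy L x 1"
    by (simp add: energy_eq_neg_en)
next
  fix U :: "(((real^'n) \<times> real) \<times> ((real^'n) \<times> real)) set" and G z X Y
  assume "open U" "\<forall>z\<in>U. snd (fst z) \<noteq> snd (snd z)" "smooth_on U G"
    "\<forall>z\<in>U. fst (G z) = snd z \<and> scheme L (fst z) (snd z) (snd (G z))" "z \<in> U"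
  then show "omega L (G z) (frechet_derivative G (at z) X) (frechet_derivative G (at z) Y) = omega L z X Y"
    by (rule scheme_map_preserves_omega[OF assms])
qed

end
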